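(* Let $\nu>0$, $d\ge1$ an integer and $m\ge1$ an integer. Then \[ I(d,\nu,m):=\sum_{n>m}\ \sum_{q\in\mathbb{Z}^{d-1}}\left(n^2+|q|^2\right)^{-\nu-d/2}\;\le\;\frac{\beta(d,\nu)}{m^{2\nu}}, \] where the sum over $n$ runs over integers $n>m$ and $\beta$ is defined by $\beta(1,\nu)=\frac{1}{2\nu}$ and $\beta(d,\nu)=\left(4+\frac{2}{2\nu+d-1}\right)\beta(d-1,\nu)$ for $d>1$. In particular, for any $\nu\ge 1/2$, $\beta(d,\nu)\le \frac{5^{d-1}}{2\nu}$ for all $d=1,2,\dots$.
   Context: $|q|$ denotes the Euclidean norm of $q\in\mathbb{Z}^{d-1}$; when $d=1$ the inner sum over $\mathbb{Z}^{0}$ consists of the single term $q=0$ (so $I(1,\nu,m)=\sum_{n>m}n^{-2\nu-1}$). *)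

theory Defs
  imports "HOL-Analysis.Analysis"
begin

text \<open>The integer lattice Z^k, realised as integer vectors indexed by {0..<k}
  (functions nat => int vanishing from index k on). For k = 0 it is the
  singleton containing the zero vector.\<close>
definition Zlat :: "nat \<Rightarrow> (nat \<Rightarrow> int) set" where
  "Zlat k = {q. \<forall>i\<ge>k. q i = 0}"

definition sqnorm :: "nat \<Rightarrow> (nat \<Rightarrow> int) \<Rightarrow> real" where
  "sqnorm k q = (\<Sum>i<k. (real_of_int (q i))^2)"

definition Iterm :: "nat \<Rightarrow> real \<Rightarrow> nat \<Rightarrow> (nat \<Rightarrow> int) \<Rightarrow> real" where
  "Iterm d \<nu> n q = (real n ^ 2 + sqnorm (d - 1) q) powr (- \<nu> - real d / 2)"

definition I :: "nat \<Rightarrow> real \<Rightarrow> nat \<Rightarrow> real" where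
  "I d \<nu> m = (\<Sum>\<^sub>\<infinity>n\<in>{m<..}. \<Sum>\<^sub>\<infinity>q\<in>Zlat (d - 1). Iterm d \<nu> n q)"

text \<open>beta(1,nu) = 1/(2 nu), beta(d,nu) = (4 + 2/(2 nu + d - 1)) beta(d-1,nu) for d > 1;
  the value at d = 0 is irrelevant (set to 0).\<close>
fun beta :: "nat \<Rightarrow> real \<Rightarrow> real" where
  "beta 0 \<nu> = 0"
| "beta (Suc 0) \<nu> = 1 / (2 * \<nu>)"
| "beta (Suc (Suc d)) \<nu> = (4 + 2 / (2 * \<nu> + real (Suc d))) * beta (Suc d) \<nu>"

end

theory Submission
  imports Defs
begin

text \<open>All finite partial sums are bounded, by induction on d. For d = 1 the sum of
  n powr (-2 nu - 1) over n > m telescopes against m powr (-2 nu) / (2 nu) by the mean value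
  theorem. For the step from d to d + 1, split q = (q', k) with k the last coordinate and, for
  fixed q', group the pairs (n, k) with n > m into the square shells max n |k| = t. A shell has
  at most 4 t points, on each of which the summand is at most
  (t^2 + |q'|^2) powr (-nu - (d+1)/2), and t times this is at most
  (t^2 + |q'|^2) powr (-nu - d/2). Hence I(d+1) \<le> 4 I(d), and 4 \<le> beta(d+1)/beta(d).\<close>

lemma mult_powr_le_powr_diff:
  fixes a x :: real
  assumes "a > 0" and "x > 0"
  shows "a * (x + 1) powr (-a - 1) \<le> x powr (-a) - (x + 1) powr (-a)"
proof -
  have "((\<lambda>z. z powr (-a)) has_real_derivative (-a) * z powr (-a - 1)) (at z)"
    if "x \<le> z" "z \<le> x + 1" for z
    using \<open>x > 0\<close> that by (intro has_real_derivative_powr) auto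
  from MVT2[of x "x + 1", OF _ this] obtain z where z: "x < z" "z < x + 1"
    and mvt: "(x + 1) powr (-a) - x powr (-a) = (x + 1 - x) * ((-a) * z powr (-a - 1))"
    by auto
  have "(x + 1) powr (-a - 1) \<le> z powr (-a - 1)"
    using z assms by (intro powr_mono2') auto
  then have "a * (x + 1) powr (-a - 1) \<le> a * z powr (-a - 1)"
    using \<open>a > 0\<close> by simp
  with mvt show ?thesis by (simp add: algebra_simps)
qed

lemma sum_powr_greaterThanAtMost_le:
  fixes a :: real
  assumes "a > 0" and "m \<ge> 1"
  shows "(\<Sum>n\<in>{m<..T}. real n powr (-a - 1)) \<le> real m powr (-a) / a"
proof (cases "m \<le> T")
  case True
  then have "a * (\<Sum>n\<in>{m<..T}. real n powr (-a - 1)) \<le> real m powr (-a) - real T powr (-a)"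
  proof (induction T rule: dec_induct)
    case (step k)
    have "{m<..Suc k} = insert (Suc k) {m<..k}"
      using step by auto
    moreover have "a * real (Suc k) powr (-a - 1) \<le> real k powr (-a) - real (Suc k) powr (-a)"
      using mult_powr_le_powr_diff[OF \<open>a > 0\<close>, of "real k"] step \<open>m \<ge> 1\<close> by (simp add: add.commute)
    ultimately show ?case
      using step by (simp add: distrib_left)
  qed simp
  moreover have "real T powr (-a) \<ge> 0" by simp
  ultimately have "a * (\<Sum>n\<in>{m<..T}. real n powr (-a - 1)) \<le> real m powr (-a)"
    by linarith
  then show ?thesis
    using \<open>a > 0\<close> by (simp add: field_simps)
qed (use \<open>a > 0\<close> in simp)

lemma sum_symmetric_int_interval_Suc:
  fixes g :: "real \<Rightarrow> real"
  shows "(\<Sum>k\<in>{-int (Suc T)..int (Suc T)}. g (real_of_int k ^ 2))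
       = (\<Sum>k\<in>{-int T..int T}. g (real_of_int k ^ 2)) + 2 * g (real (Suc T) ^ 2)"
proof -
  have "{-int (Suc T)..int (Suc T)} = insert (-int (Suc T)) (insert (int (Suc T)) {-int T..int T})"
    by auto
  moreover have "(- 1 - real T)^2 = (1 + real T)^2"
    by (simp add: power2_eq_square algebra_simps)
  ultimately show ?thesis by simp
qed

text \<open>The shell max n |k| = t of the grid {m<..T} \<times> {-T..T} has at most 4 t points
  because m \<ge> 1, and on it h is largest at the corner t^2.\<close>

lemma sum_square_grid_le_shells:
  fixes h :: "real \<Rightarrow> real"
  assumes "m \<ge> 1" and h_nonneg: "\<And>x. h x \<ge> 0"
    and h_antimono: "\<And>x y. 1 \<le> x \<Longrightarrow> x \<le> y \<Longrightarrow> h y \<le> h x"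
  shows "(\<Sum>n\<in>{m<..T}. \<Sum>k\<in>{-int T..int T}. h (real n ^ 2 + real_of_int k ^ 2))
         \<le> (\<Sum>t\<in>{m<..T}. 4 * real t * h (real t ^ 2))"
proof (induction T)
  case (Suc T)
  show ?case
  proof (cases "m \<le> T")
    case True
    define H where "H = h (real (Suc T) ^ 2)"
    have split_last: "{m<..Suc T} = insert (Suc T) {m<..T}"
      using True by auto
    have old_rows: "(\<Sum>k\<in>{-int (Suc T)..int (Suc T)}. h (real n ^ 2 + real_of_int k ^ 2))
        \<le> (\<Sum>k\<in>{-int T..int T}. h (real n ^ 2 + real_of_int k ^ 2)) + 2 * H" for n
      using sum_symmetric_int_interval_Suc[of "\<lambda>x. h (real n ^ 2 + x)" T]
        h_antimono[of "real (Suc T) ^ 2" "real n ^ 2 + real (Suc T) ^ 2"]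
      unfolding H_def by simp
    have new_row: "(\<Sum>k\<in>{-int (Suc T)..int (Suc T)}. h (real (Suc T) ^ 2 + real_of_int k ^ 2))
        \<le> real (2 * T + 3) * H"
      using sum_bounded_above[of "{-int (Suc T)..int (Suc T)}"
          "\<lambda>k. h (real (Suc T) ^ 2 + real_of_int k ^ 2)" H]
      unfolding H_def by (simp add: h_antimono add.commute)
    have "real (T - m) * 2 + real (2 * T + 3) \<le> 4 * real (Suc T)"
      using True \<open>m \<ge> 1\<close> by simp
    from mult_right_mono[OF this h_nonneg[of "real (Suc T) ^ 2"]]
    have count: "real (T - m) * (2 * H) + real (2 * T + 3) * H \<le> 4 * real (Suc T) * H"
      unfolding H_def by (simp add: algebra_simps)
    have "(\<Sum>n\<in>{m<..Suc T}. \<Sum>k\<in>{-int (Suc T)..int (Suc T)}. h (real n ^ 2 + real_of_int k ^ 2))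
        \<le> (\<Sum>n\<in>{m<..T}. (\<Sum>k\<in>{-int T..int T}. h (real n ^ 2 + real_of_int k ^ 2)) + 2 * H)
          + real (2 * T + 3) * H"
    proof -
      have "(\<Sum>n\<in>{m<..Suc T}. \<Sum>k\<in>{-int (Suc T)..int (Suc T)}. h (real n ^ 2 + real_of_int k ^ 2))
          = (\<Sum>n\<in>{m<..T}. \<Sum>k\<in>{-int (Suc T)..int (Suc T)}. h (real n ^ 2 + real_of_int k ^ 2))
            + (\<Sum>k\<in>{-int (Suc T)..int (Suc T)}. h (real (Suc T) ^ 2 + real_of_int k ^ 2))"
        unfolding split_last by (simp add: add.commute)
      moreover have "(\<Sum>n\<in>{m<..T}. \<Sum>k\<in>{-int (Suc T)..int (Suc T)}. h (real n ^ 2 + real_of_int k ^ 2))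
          \<le> (\<Sum>n\<in>{m<..T}. (\<Sum>k\<in>{-int T..int T}. h (real n ^ 2 + real_of_int k ^ 2)) + 2 * H)"
        by (rule sum_mono) (rule old_rows)
      ultimately show ?thesis
        using new_row by linarith
    qed
    also have "\<dots> \<le> (\<Sum>t\<in>{m<..T}. 4 * real t * h (real t ^ 2)) + 4 * real (Suc T) * H"
      using Suc.IH count by (simp add: sum.distrib)
    also have "\<dots> = (\<Sum>t\<in>{m<..Suc T}. 4 * real t * h (real t ^ 2))"
      unfolding split_last H_def by simp
    finally show ?thesis .
  qed simp
qed simp

lemma mult_powr_sum_square_le:
  fixes t Q s :: real
  assumes "t \<ge> 1" and "Q \<ge> 0"
  shows "t * (t^2 + Q) powr (-s) \<le> (t^2 + Q) powr (-s + 1/2)"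
proof -
  have "t = (t^2) powr (1/2)"
    using assms by (simp add: powr_half_sqrt)
  also have "\<dots> \<le> (t^2 + Q) powr (1/2)"
    using assms by (intro powr_mono2) auto
  finally have "t * (t^2 + Q) powr (-s) \<le> (t^2 + Q) powr (1/2) * (t^2 + Q) powr (-s)"
    by (intro mult_right_mono) auto
  also have "\<dots> = (t^2 + Q) powr (-s + 1/2)"
    by (simp add: powr_add[symmetric])
  finally show ?thesis .
qed

lemma beta_nonneg: "\<nu> > 0 \<Longrightarrow> beta d \<nu> \<ge> 0"
  by (induction d \<nu> rule: beta.induct) auto

lemma four_mult_beta_le: "\<nu> > 0 \<Longrightarrow> 4 * beta (Suc d) \<nu> \<le> beta (Suc (Suc d)) \<nu>"
  using beta_nonneg[of \<nu> "Suc d"] by (simp add: mult_right_mono)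

lemma beta_le_five_pow:
  assumes "\<nu> \<ge> 1/2"
  shows "beta (Suc d) \<nu> \<le> 5 ^ d / (2 * \<nu>)"
proof (induction d)
  case (Suc d)
  have "2 / (2 * \<nu> + real (Suc d)) \<le> 1"
    using assms by (simp add: field_simps)
  then have "beta (Suc (Suc d)) \<nu> \<le> 5 * beta (Suc d) \<nu>"
    using beta_nonneg[of \<nu> "Suc d"] assms by (simp add: mult_right_mono)
  also have "\<dots> \<le> 5 * (5 ^ d / (2 * \<nu>))"
    using Suc.IH by simp
  finally show ?case by simp
qed simp

lemma Zlat_0: "Zlat 0 = {\<lambda>_. 0}"
  unfolding Zlat_def by auto

lemma sqnorm_fun_upd: "sqnorm (Suc d) (q(d := k)) = sqnorm d q + (real_of_int k)^2"
  unfolding sqnorm_def by (simp add: lessThan_Suc)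

lemma Iterm_nonneg: "Iterm d \<nu> n q \<ge> 0"
  unfolding Iterm_def by simp

lemma Iterm_1:
  assumes "n > 0"
  shows "Iterm 1 \<nu> n q = real n powr (-(2 * \<nu>) - 1)"
proof -
  have "Iterm 1 \<nu> n q = (real n powr 2) powr (-\<nu> - 1/2)"
    using assms unfolding Iterm_def sqnorm_def by simp
  also have "\<dots> = real n powr (2 * (-\<nu> - 1/2))"
    by (rule powr_powr)
  also have "\<dots> = real n powr (-(2 * \<nu>) - 1)"
    by (simp add: algebra_simps)
  finally show ?thesis .
qed

lemma sum_Iterm_1_le_beta:
  assumes "\<nu> > 0" and "m \<ge> 1"
  shows "(\<Sum>n\<in>{m<..T}. Iterm 1 \<nu> n q) \<le> beta 1 \<nu> / real m powr (2 * \<nu>)"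
proof -
  have "(\<Sum>n\<in>{m<..T}. Iterm 1 \<nu> n q) = (\<Sum>n\<in>{m<..T}. real n powr (-(2 * \<nu>) - 1))"
    by (intro sum.cong refl Iterm_1) auto
  also have "\<dots> \<le> real m powr (-(2 * \<nu>)) / (2 * \<nu>)"
    using sum_powr_greaterThanAtMost_le[of "2 * \<nu>" m T] assms by simp
  also have "\<dots> = beta 1 \<nu> / real m powr (2 * \<nu>)"
    by (simp add: powr_minus divide_simps)
  finally show ?thesis .
qed

lemma sum_Iterm_box_le:
  assumes "\<nu> > 0" and "m \<ge> 1" and "finite Q"
  shows "(\<Sum>(n, q, k)\<in>{m<..T} \<times> Q \<times> {-int T..int T}. Iterm (Suc (Suc d)) \<nu> n (q(d := k)))
         \<le> 4 * (\<Sum>(n, q)\<in>{m<..T} \<times> Q. Iterm (Suc d) \<nu> n q)"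
proof -
  define h where "h q x = (x + sqnorm d q) powr (-\<nu> - real (Suc (Suc d)) / 2)" for q x
  have sqnorm_nonneg: "sqnorm d q \<ge> 0" for q
    unfolding sqnorm_def by (simp add: sum_nonneg)
  have Iterm_h: "Iterm (Suc (Suc d)) \<nu> n (q(d := k)) = h q (real n ^ 2 + real_of_int k ^ 2)" for n q k
    unfolding Iterm_def h_def by (simp add: sqnorm_fun_upd add_ac)
  have shell: "real t * h q (real t ^ 2) \<le> Iterm (Suc d) \<nu> t q" if "t > m" for t q
  proof -
    have "-(\<nu> + real (Suc (Suc d)) / 2) + 1/2 = -\<nu> - real (Suc d) / 2"
      by (simp add: field_simps)
    note mult_powr_sum_square_le[of "real t" "sqnorm d q" "\<nu> + real (Suc (Suc d)) / 2",
        unfolded this]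
    then have "real t * (real t ^ 2 + sqnorm d q) powr (-\<nu> - real (Suc (Suc d)) / 2)
        \<le> (real t ^ 2 + sqnorm d q) powr (-\<nu> - real (Suc d) / 2)"
      using that \<open>m \<ge> 1\<close> sqnorm_nonneg by simp
    then show ?thesis
      unfolding h_def Iterm_def by (simp add: add_ac)
  qed
  have "(\<Sum>(n, q, k)\<in>{m<..T} \<times> Q \<times> {-int T..int T}. Iterm (Suc (Suc d)) \<nu> n (q(d := k)))
      = (\<Sum>q\<in>Q. \<Sum>n\<in>{m<..T}. \<Sum>k\<in>{-int T..int T}. h q (real n ^ 2 + real_of_int k ^ 2))"
    by (simp add: Iterm_h sum.cartesian_product[symmetric] sum.swap[of _ Q])
  also have "\<dots> \<le> (\<Sum>q\<in>Q. \<Sum>t\<in>{m<..T}. 4 * real t * h q (real t ^ 2))"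
  proof (rule sum_mono, rule sum_square_grid_le_shells[OF \<open>m \<ge> 1\<close>])
    show "h q x \<ge> 0" for q x
      unfolding h_def by simp
    show "h q y \<le> h q x" if "1 \<le> x" "x \<le> y" for q x y
      unfolding h_def using that sqnorm_nonneg[of q] \<open>\<nu> > 0\<close> by (intro powr_mono2') auto
  qed
  also have "\<dots> \<le> (\<Sum>q\<in>Q. \<Sum>t\<in>{m<..T}. 4 * Iterm (Suc d) \<nu> t q)"
    using shell by (intro sum_mono) auto
  also have "\<dots> = 4 * (\<Sum>(n, q)\<in>{m<..T} \<times> Q. Iterm (Suc d) \<nu> n q)"
    by (simp add: sum_distrib_left sum.cartesian_product[symmetric] sum.swap[of _ Q])
  finally show ?thesis .
qed

lemma finite_subset_Zlat_Suc_covered: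
  assumes "finite F" and "F \<subseteq> {m<..} \<times> Zlat (Suc d)"
  obtains T Q where "finite Q" and "Q \<subseteq> Zlat d"
    and "F \<subseteq> (\<lambda>(n, q, k). (n, q(d := k))) ` ({m<..T} \<times> Q \<times> {-int T..int T})"
proof -
  obtain T where T: "(\<lambda>(n, q). n + nat \<bar>q d\<bar>) ` F \<subseteq> {..T}"
    using finite_nat_iff_bounded_le \<open>finite F\<close> by blast
  define Q where "Q = (\<lambda>(n, q). q(d := 0)) ` F"
  have "F \<subseteq> (\<lambda>(n, q, k). (n, q(d := k))) ` ({m<..T} \<times> Q \<times> {-int T..int T})"
  proof
    fix p assume "p \<in> F"
    obtain n q where p: "p = (n, q)"
      by (cases p)
    have "n > m"
      using \<open>p \<in> F\<close> assms(2) p by auto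
    moreover have "n + nat \<bar>q d\<bar> \<le> T"
      using imageI[OF \<open>p \<in> F\<close>, of "\<lambda>(n, q). n + nat \<bar>q d\<bar>"] T p by auto
    moreover have "q(d := 0) \<in> Q"
      unfolding Q_def using \<open>p \<in> F\<close> p by (auto intro: rev_image_eqI)
    ultimately have "(n, q(d := 0), q d) \<in> {m<..T} \<times> Q \<times> {-int T..int T}"
      by auto
    then show "p \<in> (\<lambda>(n, q, k). (n, q(d := k))) ` ({m<..T} \<times> Q \<times> {-int T..int T})"
      unfolding p by (rule rev_image_eqI) simp
  qed
  moreover have "finite Q"
    unfolding Q_def using \<open>finite F\<close> by simp
  moreover have "Q \<subseteq> Zlat d"
    unfolding Q_def using assms(2) by (auto simp: Zlat_def)
  ultimately show thesis
    using that by blast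
qed

lemma inj_on_fun_upd_Zlat: "inj_on (\<lambda>(n, q, k). (n, q(d := k))) (A \<times> Zlat d \<times> K)"
proof (rule inj_onI, clarsimp)
  fix q q' :: "nat \<Rightarrow> int" and k k'
  assume "q \<in> Zlat d" "q' \<in> Zlat d" and eq: "q(d := k) = q'(d := k')"
  then have "q d = q' d"
    unfolding Zlat_def by simp
  moreover have "q i = q' i" if "i \<noteq> d" for i
    using fun_cong[OF eq, of i] that by simp
  ultimately have "q = q'"
    by (intro ext) (metis)
  with fun_cong[OF eq, of d] show "q = q' \<and> k = k'"
    by simp
qed

lemma sum_Iterm_le_beta:
  assumes "\<nu> > 0" and "m \<ge> 1" and "finite F" and "F \<subseteq> {m<..} \<times> Zlat d"
  shows "(\<Sum>(n, q)\<in>F. Iterm (Suc d) \<nu> n q) \<le> beta (Suc d) \<nu> / real m powr (2 * \<nu>)"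
  using assms(3,4)
proof (induction d arbitrary: F)
  case 0
  obtain T where "fst ` F \<subseteq> {..T}"
    using finite_nat_iff_bounded_le \<open>finite F\<close> by blast
  with "0.prems"(2) have "F \<subseteq> {m<..T} \<times> {\<lambda>_. 0}"
    by (auto simp: Zlat_0 subset_iff)
  then have "(\<Sum>(n, q)\<in>F. Iterm 1 \<nu> n q) \<le> (\<Sum>(n, q)\<in>{m<..T} \<times> {\<lambda>_. 0}. Iterm 1 \<nu> n q)"
    by (intro sum_mono2) (auto simp: Iterm_nonneg)
  also have "\<dots> \<le> beta 1 \<nu> / real m powr (2 * \<nu>)"
    using sum_Iterm_1_le_beta[OF assms(1,2)] by (simp add: sum.cartesian_product[symmetric])
  finally show ?case by simp
next
  case (Suc d)
  define upd :: "nat \<times> (nat \<Rightarrow> int) \<times> int \<Rightarrow> nat \<times> (nat \<Rightarrow> int)"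
    where "upd = (\<lambda>(n, q, k). (n, q(d := k)))"
  obtain T Q where "finite Q" "Q \<subseteq> Zlat d"
    and cover: "F \<subseteq> upd ` ({m<..T} \<times> Q \<times> {-int T..int T})"
    using finite_subset_Zlat_Suc_covered[OF Suc.prems] unfolding upd_def .
  have inj: "inj_on upd ({m<..T} \<times> Q \<times> {-int T..int T})"
    unfolding upd_def
    by (rule inj_on_subset[OF inj_on_fun_upd_Zlat]) (use \<open>Q \<subseteq> Zlat d\<close> in auto)
  have "(\<Sum>(n, q)\<in>F. Iterm (Suc (Suc d)) \<nu> n q)
      \<le> (\<Sum>(n, q)\<in>upd ` ({m<..T} \<times> Q \<times> {-int T..int T}). Iterm (Suc (Suc d)) \<nu> n q)"
    using cover \<open>finite Q\<close> by (intro sum_mono2) (auto simp: Iterm_nonneg)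
  also have "\<dots> = (\<Sum>(n, q, k)\<in>{m<..T} \<times> Q \<times> {-int T..int T}. Iterm (Suc (Suc d)) \<nu> n (q(d := k)))"
    unfolding sum.reindex[OF inj] by (simp add: upd_def case_prod_beta)
  also have "\<dots> \<le> 4 * (\<Sum>(n, q)\<in>{m<..T} \<times> Q. Iterm (Suc d) \<nu> n q)"
    using sum_Iterm_box_le[OF assms(1,2) \<open>finite Q\<close>] .
  also have "\<dots> \<le> 4 * (beta (Suc d) \<nu> / real m powr (2 * \<nu>))"
  proof -
    have "{m<..T} \<times> Q \<subseteq> {m<..} \<times> Zlat d"
      using \<open>Q \<subseteq> Zlat d\<close> by auto
    with Suc.IH \<open>finite Q\<close> show ?thesis
      by (intro mult_left_mono) auto
  qed
  also have "\<dots> \<le> beta (Suc (Suc d)) \<nu> / real m powr (2 * \<nu>)"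
    using four_mult_beta_le[OF assms(1), of d] by (simp add: divide_right_mono)
  finally show ?case .
qed

theorem lemma3p4:
  fixes \<nu> :: real and d m :: nat
  assumes "\<nu> > 0" and "d \<ge> 1" and "m \<ge> 1"
  shows "(\<lambda>(n, q). Iterm d \<nu> n q) summable_on ({m<..} \<times> Zlat (d - 1))
         \<and> I d \<nu> m \<le> beta d \<nu> / real m powr (2 * \<nu>)
         \<and> (\<nu> \<ge> 1/2 \<longrightarrow> (\<forall>d'\<ge>1. beta d' \<nu> \<le> 5 ^ (d' - 1) / (2 * \<nu>)))"
proof -
  define f where "f = (\<lambda>(n, q). Iterm d \<nu> n q)"
  define A where "A = {m<..} \<times> Zlat (d - 1)"
  have finite_sums: "sum f F \<le> beta d \<nu> / real m powr (2 * \<nu>)" if "finite F" "F \<subseteq> A" for F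
    using sum_Iterm_le_beta[OF assms(1,3) that[unfolded A_def]] \<open>d \<ge> 1\<close>
    unfolding f_def by simp
  have summable: "f summable_on A"
    using finite_sums
    by (intro nonneg_bdd_above_summable_on bdd_aboveI) (auto simp: f_def Iterm_nonneg)
  have "I d \<nu> m = infsum f A"
    using infsum_Sigma'_banach[of "\<lambda>n q. Iterm d \<nu> n q"] summable
    unfolding I_def f_def A_def by simp
  also have "\<dots> \<le> beta d \<nu> / real m powr (2 * \<nu>)"
    using infsum_le_finite_sums[OF summable finite_sums] .
  finally have "I d \<nu> m \<le> beta d \<nu> / real m powr (2 * \<nu>)" .
  moreover have "beta d' \<nu> \<le> 5 ^ (d' - 1) / (2 * \<nu>)" if "\<nu> \<ge> 1/2" "d' \<ge> 1" for d'
    using beta_le_five_pow[OF that(1), of "d' - 1"] that(2) by simp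
  ultimately show ?thesis
    using summable unfolding f_def A_def by blast
qed

end
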